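(* Let $K \subset L$ be fields and let $D: L \to L$ be a derivation (an additive map satisfying $D(ab) = aD(b) + D(a)b$) such that $\ker D = K$. Then the map \[ L \otimes_K \ker D^1 \longrightarrow \Omega_{L/K}, \qquad f \otimes \omega \mapsto f\omega, \] is injective.
   Context: $\Omega_{L/K}$ is the $L$-vector space of Kähler differentials of $L$ over $K$, with universal $K$-derivation $d: L \to \Omega_{L/K}$. Since $D(K)=0$, there is a unique $K$-linear map $D^1: \Omega_{L/K} \to \Omega_{L/K}$ with $D^1(f\, dg) = (Df)\, dg + f\, d(Dg)$ for all $f, g \in L$; $\ker D^1$ is a $K$-subspace of $\Omega_{L/K}$. *)

theory Defs
  imports Main
begin

text \<open>Concrete construction of the Kaehler differentials of L over K (L a field type 'a,
K a subset): the free L-module on symbols dg (g in L), represented by finitely supported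
functions 'a \<Rightarrow> 'a (omega g = coefficient of dg), modulo the L-submodule generated by
d(a+b) - da - db, d(ab) - a db - b da, and dc for c in K.\<close>

definition fsupp :: "('b \<Rightarrow> 'c::zero) \<Rightarrow> bool" where
  "fsupp f \<longleftrightarrow> finite {x. f x \<noteq> 0}"

definition dsym :: "'a \<Rightarrow> ('a \<Rightarrow> 'a::field)" where
  "dsym g = (\<lambda>x. if x = g then 1 else 0)"

inductive_set kd_rel :: "'a::field set \<Rightarrow> ('a \<Rightarrow> 'a) set" for K :: "'a set" where
  zero: "(\<lambda>t. 0) \<in> kd_rel K"
| add: "x \<in> kd_rel K \<Longrightarrow> y \<in> kd_rel K \<Longrightarrow> (\<lambda>t. x t + y t) \<in> kd_rel K"
| smult: "x \<in> kd_rel K \<Longrightarrow> (\<lambda>t. c * x t) \<in> kd_rel K"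
| additive: "(\<lambda>t. dsym (a + b) t - dsym a t - dsym b t) \<in> kd_rel K"
| leibniz: "(\<lambda>t. dsym (a * b) t - a * dsym b t - b * dsym a t) \<in> kd_rel K"
| const: "c \<in> K \<Longrightarrow> dsym c \<in> kd_rel K"

definition omega_eq :: "'a::field set \<Rightarrow> ('a \<Rightarrow> 'a) \<Rightarrow> ('a \<Rightarrow> 'a) \<Rightarrow> bool" where
  "omega_eq K \<omega> \<eta> \<longleftrightarrow> (\<lambda>t. \<omega> t - \<eta> t) \<in> kd_rel K"

definition D1 :: "('a::field \<Rightarrow> 'a) \<Rightarrow> ('a \<Rightarrow> 'a) \<Rightarrow> ('a \<Rightarrow> 'a)" where
  "D1 D \<omega> = (\<lambda>x. \<Sum>g\<in>{g. \<omega> g \<noteq> 0}. D (\<omega> g) * dsym g x + \<omega> g * dsym (D g) x)"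

definition kerD1 :: "('a::field \<Rightarrow> 'a) \<Rightarrow> 'a set \<Rightarrow> ('a \<Rightarrow> 'a) set" where
  "kerD1 D K = {\<omega>. fsupp \<omega> \<and> D1 D \<omega> \<in> kd_rel K}"

text \<open>Tensor product L \<otimes>_K ker D^1: the free abelian group on pairs (f, omega) with
omega a representative in ker D^1, modulo the subgroup generated by bi-additivity,
K-balancedness, and identification of representatives equal in Omega.\<close>

definition tdelta :: "'p \<Rightarrow> ('p \<Rightarrow> int)" where
  "tdelta p = (\<lambda>q. if q = p then 1 else 0)"

inductive_set tens_rel :: "'a::field set \<Rightarrow> ('a \<Rightarrow> 'a) \<Rightarrow> (('a \<times> ('a \<Rightarrow> 'a)) \<Rightarrow> int) set"
  for K :: "'a set" and D :: "'a \<Rightarrow> 'a" where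
  zero: "(\<lambda>p. 0) \<in> tens_rel K D"
| add: "x \<in> tens_rel K D \<Longrightarrow> y \<in> tens_rel K D \<Longrightarrow> (\<lambda>p. x p + y p) \<in> tens_rel K D"
| neg: "x \<in> tens_rel K D \<Longrightarrow> (\<lambda>p. - x p) \<in> tens_rel K D"
| add_left: "\<omega> \<in> kerD1 D K \<Longrightarrow>
     (\<lambda>p. tdelta (f + f', \<omega>) p - tdelta (f, \<omega>) p - tdelta (f', \<omega>) p) \<in> tens_rel K D"
| add_right: "\<omega> \<in> kerD1 D K \<Longrightarrow> \<omega>' \<in> kerD1 D K \<Longrightarrow>
     (\<lambda>p. tdelta (f, \<lambda>t. \<omega> t + \<omega>' t) p - tdelta (f, \<omega>) p - tdelta (f, \<omega>') p) \<in> tens_rel K D"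
| balanced: "\<omega> \<in> kerD1 D K \<Longrightarrow> c \<in> K \<Longrightarrow>
     (\<lambda>p. tdelta (c * f, \<omega>) p - tdelta (f, \<lambda>t. c * \<omega> t) p) \<in> tens_rel K D"
| rep: "\<omega> \<in> kerD1 D K \<Longrightarrow> \<omega>' \<in> kerD1 D K \<Longrightarrow> omega_eq K \<omega> \<omega>' \<Longrightarrow>
     (\<lambda>p. tdelta (f, \<omega>) p - tdelta (f, \<omega>') p) \<in> tens_rel K D"

definition tensor_elem :: "'a::field set \<Rightarrow> ('a \<Rightarrow> 'a) \<Rightarrow> (('a \<times> ('a \<Rightarrow> 'a)) \<Rightarrow> int) \<Rightarrow> bool" where
  "tensor_elem K D \<xi> \<longleftrightarrow> finite {p. \<xi> p \<noteq> 0} \<and> (\<forall>p. \<xi> p \<noteq> 0 \<longrightarrow> snd p \<in> kerD1 D K)"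

definition mult_map :: "(('a::field \<times> ('a \<Rightarrow> 'a)) \<Rightarrow> int) \<Rightarrow> ('a \<Rightarrow> 'a)" where
  "mult_map \<xi> = (\<lambda>t. \<Sum>p\<in>{p. \<xi> p \<noteq> 0}. of_int (\<xi> p) * fst p * snd p t)"

end

theory Submission
  imports Defs
begin

text \<open>Elements w_1, ..., w_n of ker D^1 that are linearly independent over K stay independent
over L: in an L-relation sum f_i w_i = 0 of minimal length normalised by f_j = 1, applying D^1
yields the shorter relation sum D(f_i) w_i = 0, so all D(f_i) vanish, i.e. all f_i lie in K.
Hence if sum f_i \<otimes> w_i maps to 0 in Omega, either all f_i are 0 or some w_j is a
K-combination of the others; moving its coefficients across the tensor sign shortens the sum,
and induction on its length shows that it is 0.\<close>

definition lincomb :: "'i set \<Rightarrow> ('i \<Rightarrow> 'a::field) \<Rightarrow> ('i \<Rightarrow> 'a \<Rightarrow> 'a) \<Rightarrow> 'a \<Rightarrow> 'a" where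
  "lincomb I f w = (\<lambda>t. \<Sum>i\<in>I. f i * w i t)"

definition tensor_sum :: "'i set \<Rightarrow> ('i \<Rightarrow> 'a::field) \<Rightarrow> ('i \<Rightarrow> 'a \<Rightarrow> 'a) \<Rightarrow> ('a \<times> ('a \<Rightarrow> 'a) \<Rightarrow> int)" where
  "tensor_sum I f w = (\<lambda>p. \<Sum>i\<in>I. tdelta (f i, w i) p)"

lemma kd_rel_diff: "x \<in> kd_rel K \<Longrightarrow> y \<in> kd_rel K \<Longrightarrow> (\<lambda>t. x t - y t) \<in> kd_rel K"
  using kd_rel.add[OF _ kd_rel.smult, of x K y "-1"] by simp

lemma kd_rel_sum: "(\<And>i. i \<in> I \<Longrightarrow> x i \<in> kd_rel K) \<Longrightarrow> (\<lambda>t. \<Sum>i\<in>I. x i t) \<in> kd_rel K"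
  by (induction I rule: infinite_finite_induct) (auto intro: kd_rel.intros)

lemma kd_rel_lincomb: "(\<And>i. i \<in> I \<Longrightarrow> w i \<in> kd_rel K) \<Longrightarrow> lincomb I f w \<in> kd_rel K"
  unfolding lincomb_def by (intro kd_rel_sum kd_rel.smult)

lemma fsupp_add: "fsupp (x::'a \<Rightarrow> 'b::monoid_add) \<Longrightarrow> fsupp y \<Longrightarrow> fsupp (\<lambda>t. x t + y t)"
  unfolding fsupp_def by (rule finite_subset[of _ "{t. x t \<noteq> 0} \<union> {t. y t \<noteq> 0}"]) auto

lemma fsupp_diff: "fsupp (x::'a \<Rightarrow> 'b::group_add) \<Longrightarrow> fsupp y \<Longrightarrow> fsupp (\<lambda>t. x t - y t)"
  unfolding fsupp_def by (rule finite_subset[of _ "{t. x t \<noteq> 0} \<union> {t. y t \<noteq> 0}"]) auto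

lemma fsupp_smult: "fsupp (x::'a \<Rightarrow> 'b::mult_zero) \<Longrightarrow> fsupp (\<lambda>t. c * x t)"
  unfolding fsupp_def by (rule finite_subset[of _ "{t. x t \<noteq> 0}"]) auto

lemma fsupp_dsym: "fsupp (dsym a)"
  unfolding fsupp_def by (rule finite_subset[of _ "{a}"]) (auto simp: dsym_def)

lemma fsupp_sum: "(\<And>i. i \<in> I \<Longrightarrow> fsupp (x i :: 'a \<Rightarrow> 'b::comm_monoid_add)) \<Longrightarrow>
    fsupp (\<lambda>t. \<Sum>i\<in>I. x i t)"
proof (induction I rule: infinite_finite_induct)
  case (insert i I)
  then show ?case by (simp add: fsupp_add)
qed (simp_all add: fsupp_def)

lemma fsupp_lincomb: "(\<And>i. i \<in> I \<Longrightarrow> fsupp (w i)) \<Longrightarrow> fsupp (lincomb I f w)"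
  unfolding lincomb_def by (intro fsupp_sum fsupp_smult)

lemma kd_rel_fsupp: "x \<in> kd_rel K \<Longrightarrow> fsupp x"
  by (induction rule: kd_rel.induct)
    (auto simp: fsupp_def[of "\<lambda>t. 0"] intro!: fsupp_add fsupp_diff fsupp_smult fsupp_dsym)

lemma lincomb_remove: "finite I \<Longrightarrow> j \<in> I \<Longrightarrow> lincomb I f w t = f j * w j t + lincomb (I - {j}) f w t"
  unfolding lincomb_def by (simp add: sum.remove)

lemma lincomb_cong: "(\<And>i. i \<in> I \<Longrightarrow> f i = g i) \<Longrightarrow> lincomb I f w = lincomb I g w"
  unfolding lincomb_def by (intro ext sum.cong) auto

lemma lincomb_smult: "lincomb I (\<lambda>i. a * f i) w = (\<lambda>t. a * lincomb I f w t)"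
  unfolding lincomb_def by (simp add: sum_distrib_left mult.assoc)

lemma lincomb_substitute:
  assumes "finite I" "j \<in> I"
  shows "lincomb (I - {j}) (\<lambda>i. f i + a i * f j) w =
    (\<lambda>t. lincomb I f w t - f j * (w j t - lincomb (I - {j}) a w t))"
  using assms unfolding lincomb_def
  by (simp add: sum.distrib sum_distrib_left algebra_simps sum.remove)

lemma kd_rel_lincomb_solve:
  assumes "finite I" "j \<in> I" "c j \<noteq> 0" "lincomb I c w \<in> kd_rel K"
  shows "omega_eq K (w j) (lincomb (I - {j}) (\<lambda>i. - c i / c j) w)"
proof -
  have "lincomb I c w = (\<lambda>t. c j * (w j t - lincomb (I - {j}) (\<lambda>i. - c i / c j) w t))"
    using lincomb_remove[OF assms(1,2), of c w] assms(3)
    by (auto simp: lincomb_def sum_distrib_left field_simps sum_negf)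
  then show ?thesis
    using kd_rel.smult[OF assms(4), of "inverse (c j)"] assms(3)
    by (simp add: omega_eq_def mult.assoc[symmetric])
qed

lemma tens_rel_diff: "x \<in> tens_rel K D \<Longrightarrow> y \<in> tens_rel K D \<Longrightarrow> (\<lambda>p. x p - y p) \<in> tens_rel K D"
  using tens_rel.add[OF _ tens_rel.neg, of x K D y] by simp

lemma tens_rel_sum:
  "(\<And>i. i \<in> I \<Longrightarrow> x i \<in> tens_rel K D) \<Longrightarrow> (\<lambda>p. \<Sum>i\<in>I. x i p) \<in> tens_rel K D"
  by (induction I rule: infinite_finite_induct) (auto intro: tens_rel.intros)

lemma tens_rel_zero_left: "\<omega> \<in> kerD1 D K \<Longrightarrow> tdelta (0, \<omega>) \<in> tens_rel K D"
  using tens_rel.neg[OF tens_rel.add_left[of \<omega> D K 0 0]] by simp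

lemma tens_rel_int_mult_nat:
  assumes "\<omega> \<in> kerD1 D K"
  shows "(\<lambda>p. int m * tdelta (f, \<omega>) p - tdelta (of_nat m * f, \<omega>) p) \<in> tens_rel K D"
proof (induction m)
  case 0
  then show ?case using tens_rel.neg[OF tens_rel_zero_left[OF assms]] by simp
next
  case (Suc m)
  have "(\<lambda>p. tdelta (of_nat m * f + f, \<omega>) p - tdelta (of_nat m * f, \<omega>) p - tdelta (f, \<omega>) p)
      \<in> tens_rel K D"
    by (rule tens_rel.add_left[OF assms])
  from tens_rel_diff[OF Suc.IH this] show ?case
    by (simp add: algebra_simps)
qed

lemma tens_rel_int_mult:
  assumes "\<omega> \<in> kerD1 D K"
  shows "(\<lambda>p. n * tdelta (f, \<omega>) p - tdelta (of_int n * f, \<omega>) p) \<in> tens_rel K D"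
proof (cases n rule: int_cases2)
  case (nonneg m)
  then show ?thesis using tens_rel_int_mult_nat[OF assms, of m f] by simp
next
  case (nonpos m)
  have "(\<lambda>p. tdelta (of_nat m * f + - (of_nat m * f), \<omega>) p - tdelta (of_nat m * f, \<omega>) p
      - tdelta (- (of_nat m * f), \<omega>) p) \<in> tens_rel K D"
    by (rule tens_rel.add_left[OF assms])
  from tens_rel.add[OF tens_rel_diff[OF tens_rel.neg[OF tens_rel_int_mult_nat[OF assms, of m f]]
        tens_rel_zero_left[OF assms]] this]
  show ?thesis by (simp add: nonpos algebra_simps)
qed

lemma tens_rel_minus_tensor_sum:
  assumes "finite S" "{p. \<zeta> p \<noteq> 0} \<subseteq> S" "\<And>p. p \<in> S \<Longrightarrow> snd p \<in> kerD1 D K"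
  shows "(\<lambda>q. \<zeta> q - tensor_sum S (\<lambda>p. of_int (\<zeta> p) * fst p) snd q) \<in> tens_rel K D"
proof -
  have "(\<lambda>q. \<Sum>p\<in>S. \<zeta> p * tdelta (fst p, snd p) q - tdelta (of_int (\<zeta> p) * fst p, snd p) q)
      \<in> tens_rel K D"
    by (intro tens_rel_sum tens_rel_int_mult assms(3))
  moreover have "(\<Sum>p\<in>S. \<zeta> p * tdelta (fst p, snd p) q) = \<zeta> q" for q
    using assms(1,2) by (auto simp: tdelta_def if_distrib[of "(*) _"] sum.delta cong: if_cong)
  ultimately show ?thesis
    unfolding tensor_sum_def by (simp add: sum_subtractf)
qed

lemma mult_map_eq_lincomb:
  assumes "finite S" "{p. \<zeta> p \<noteq> 0} \<subseteq> S"
  shows "mult_map \<zeta> = lincomb S (\<lambda>p. of_int (\<zeta> p) * fst p) snd"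
  unfolding mult_map_def lincomb_def
  by (intro ext sum.mono_neutral_left) (use assms in \<open>auto simp: mult.assoc\<close>)

lemma mult_map_diff:
  assumes "finite {p. \<xi> p \<noteq> 0}" "finite {p. \<eta> p \<noteq> 0}"
  shows "mult_map (\<lambda>p. \<xi> p - \<eta> p) = (\<lambda>t. mult_map \<xi> t - mult_map \<eta> t)"
proof -
  let ?S = "{p. \<xi> p \<noteq> 0} \<union> {p. \<eta> p \<noteq> 0}"
  have "finite ?S" using assms by simp
  then show ?thesis
    by (subst (1 2 3) mult_map_eq_lincomb[of ?S])
      (auto simp: lincomb_def sum_subtractf[symmetric] algebra_simps)
qed

locale derivation_with_kernel =
  fixes K :: "'a::field set" and D :: "'a \<Rightarrow> 'a"
  assumes D_add: "\<And>a b. D (a + b) = D a + D b"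
    and D_mult: "\<And>a b. D (a * b) = a * D b + D a * b"
    and ker_D: "{x. D x = 0} = K"
begin

lemma mem_K_iff: "c \<in> K \<longleftrightarrow> D c = 0"
  using ker_D by auto

lemma D_zero [simp]: "D 0 = 0"
  using D_add[of 0 0] by (metis add.right_neutral add_left_cancel)

lemma D_one [simp]: "D 1 = 0"
  using D_mult[of 1 1] by (metis add.right_neutral add_left_cancel mult_1_left mult_1_right)

lemma D_minus: "D (- a) = - D a"
  using D_add[of a "- a"] by (simp add: add_eq_0_iff2 add.commute)

lemma D_divide_const: "D x = 0 \<Longrightarrow> D y = 0 \<Longrightarrow> y \<noteq> 0 \<Longrightarrow> D (x / y) = 0"
  using D_mult[of "x / y" y] by simp

lemma D1_eq:
  assumes "finite S" "{g. w g \<noteq> 0} \<subseteq> S"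
  shows "D1 D w = (\<lambda>x. D (w x) + (\<Sum>g\<in>S. w g * dsym (D g) x))"
proof
  fix x
  let ?A = "{g. w g \<noteq> 0}"
  have "finite ?A" using assms finite_subset by blast
  then have "(\<Sum>g\<in>?A. D (w g) * dsym g x) = D (w x)"
    by (simp add: dsym_def if_distrib[of "(*) _"] sum.delta' cong: if_cong)
  moreover have "(\<Sum>g\<in>?A. w g * dsym (D g) x) = (\<Sum>g\<in>S. w g * dsym (D g) x)"
    by (rule sum.mono_neutral_left) (use assms in auto)
  ultimately show "D1 D w x = D (w x) + (\<Sum>g\<in>S. w g * dsym (D g) x)"
    unfolding D1_def by (simp add: sum.distrib)
qed

lemma D1_add:
  assumes "fsupp x" "fsupp y"
  shows "D1 D (\<lambda>t. x t + y t) = (\<lambda>s. D1 D x s + D1 D y s)"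
proof -
  let ?S = "{g. x g \<noteq> 0} \<union> {g. y g \<noteq> 0}"
  have "finite ?S" using assms by (simp add: fsupp_def)
  then show ?thesis
    by (subst (1 2 3) D1_eq[of ?S]) (auto simp: D_add sum.distrib algebra_simps)
qed

lemma D1_smult:
  assumes "fsupp x"
  shows "D1 D (\<lambda>t. c * x t) = (\<lambda>s. D c * x s + c * D1 D x s)"
proof -
  let ?S = "{g. x g \<noteq> 0}"
  have "finite ?S" using assms by (simp add: fsupp_def)
  then show ?thesis
    by (subst (1 2) D1_eq[of ?S]) (auto simp: D_mult sum_distrib_left algebra_simps)
qed

lemma D1_dsym: "D1 D (dsym a) = dsym (D a)"
  using D1_eq[of "{a}" "dsym a"] by (auto simp: dsym_def)

lemma D1_zero: "D1 D (\<lambda>t. 0) = (\<lambda>t. 0)"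
  by (simp add: D1_def)

lemma D1_sum:
  "(\<And>i. i \<in> I \<Longrightarrow> fsupp (x i)) \<Longrightarrow> D1 D (\<lambda>t. \<Sum>i\<in>I. x i t) = (\<lambda>s. \<Sum>i\<in>I. D1 D (x i) s)"
proof (induction I rule: infinite_finite_induct)
  case (insert i I)
  then show ?case using D1_add[of "x i" "\<lambda>t. \<Sum>i\<in>I. x i t"] fsupp_sum[of I x] by simp
qed (simp_all add: D1_zero)

lemma D1_lincomb:
  assumes "\<And>i. i \<in> I \<Longrightarrow> fsupp (w i)"
  shows "D1 D (lincomb I f w) = (\<lambda>t. lincomb I (\<lambda>i. D (f i)) w t + lincomb I f (\<lambda>i. D1 D (w i)) t)"
  unfolding lincomb_def using assms by (simp add: D1_sum fsupp_smult D1_smult sum.distrib)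

text \<open>That is, D^1 is well defined on Omega.\<close>

lemma D1_kd_rel: "x \<in> kd_rel K \<Longrightarrow> D1 D x \<in> kd_rel K"
proof (induction rule: kd_rel.induct)
  case zero
  then show ?case by (simp add: D1_zero kd_rel.zero)
next
  case (add x y)
  then show ?case by (simp add: D1_add kd_rel_fsupp kd_rel.add)
next
  case (smult x c)
  then show ?case by (simp add: D1_smult kd_rel_fsupp kd_rel.add kd_rel.smult)
next
  case (additive a b)
  have split: "(\<lambda>t. dsym (a + b) t - dsym a t - dsym b t) =
      (\<lambda>t. dsym (a + b) t + ((-1) * dsym a t + (-1) * dsym b t))"
    by auto
  have "D1 D (\<lambda>t. dsym (a + b) t + ((-1) * dsym a t + (-1) * dsym b t)) =
      (\<lambda>t. dsym (D a + D b) t - dsym (D a) t - dsym (D b) t)"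
    by (simp only: D1_add D1_smult fsupp_dsym fsupp_add fsupp_smult D1_dsym)
      (simp add: D_add D_minus algebra_simps)
  then show ?case unfolding split by (simp only: kd_rel.additive)
next
  case (leibniz a b)
  have split: "(\<lambda>t. dsym (a * b) t - a * dsym b t - b * dsym a t) =
      (\<lambda>t. dsym (a * b) t + ((-a) * dsym b t + (-b) * dsym a t))"
    by auto
  have "D1 D (\<lambda>t. dsym (a * b) t + ((-a) * dsym b t + (-b) * dsym a t)) =
      (\<lambda>t. (dsym (a * D b + D a * b) t - dsym (a * D b) t - dsym (D a * b) t) +
        ((dsym (a * D b) t - a * dsym (D b) t - D b * dsym a t) +
         (dsym (D a * b) t - D a * dsym b t - b * dsym (D a) t)))"
    by (simp only: D1_add D1_smult fsupp_dsym fsupp_add fsupp_smult D1_dsym)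
      (simp add: D_mult D_minus algebra_simps)
  then show ?case unfolding split
    by (simp only: kd_rel.add kd_rel.additive kd_rel.leibniz)
next
  case (const c)
  then show ?case using kd_rel.const[of 0 K] ker_D by (auto simp: D1_dsym)
qed

lemma kerD1_zero: "(\<lambda>t. 0) \<in> kerD1 D K"
  by (simp add: kerD1_def fsupp_def D1_zero kd_rel.zero)

lemma kerD1_smult: "w \<in> kerD1 D K \<Longrightarrow> c \<in> K \<Longrightarrow> (\<lambda>t. c * w t) \<in> kerD1 D K"
  unfolding kerD1_def by (auto simp: mem_K_iff fsupp_smult D1_smult kd_rel.smult)

lemma kerD1_lincomb:
  assumes "\<And>i. i \<in> I \<Longrightarrow> w i \<in> kerD1 D K" "\<And>i. i \<in> I \<Longrightarrow> c i \<in> K"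
  shows "lincomb I c w \<in> kerD1 D K"
proof -
  have fsupp: "\<And>i. i \<in> I \<Longrightarrow> fsupp (w i)" using assms(1) by (simp add: kerD1_def)
  have "lincomb I (\<lambda>i. D (c i)) w = (\<lambda>t. 0)"
    unfolding lincomb_def using assms(2) by (simp add: mem_K_iff)
  moreover have "lincomb I c (\<lambda>i. D1 D (w i)) \<in> kd_rel K"
    using assms(1) by (intro kd_rel_lincomb) (simp add: kerD1_def)
  ultimately show ?thesis
    unfolding kerD1_def using fsupp_lincomb[OF fsupp] by (simp add: D1_lincomb[OF fsupp])
qed

lemma kd_rel_lincomb_D:
  assumes "\<And>i. i \<in> I \<Longrightarrow> w i \<in> kerD1 D K" "lincomb I g w \<in> kd_rel K"
  shows "lincomb I (\<lambda>i. D (g i)) w \<in> kd_rel K"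
proof -
  have fsupp: "\<And>i. i \<in> I \<Longrightarrow> fsupp (w i)" using assms(1) by (simp add: kerD1_def)
  have "lincomb I g (\<lambda>i. D1 D (w i)) \<in> kd_rel K"
    using assms(1) by (intro kd_rel_lincomb) (simp add: kerD1_def)
  from kd_rel_diff[OF D1_kd_rel[OF assms(2)] this] show ?thesis
    by (simp add: D1_lincomb[OF fsupp])
qed

lemma kerD1_L_relation_imp_K_relation:
  assumes "finite I" "\<And>i. i \<in> I \<Longrightarrow> w i \<in> kerD1 D K" "lincomb I f w \<in> kd_rel K"
    and "j \<in> I" "f j \<noteq> 0"
  shows "\<exists>c. (\<forall>i\<in>I. c i \<in> K) \<and> (\<exists>i\<in>I. c i \<noteq> 0) \<and> lincomb I c w \<in> kd_rel K"
  using assms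
proof (induction "card I" arbitrary: I f j rule: less_induct)
  case less
  define g where "g i = inverse (f j) * f i" for i
  have rel_g: "lincomb I g w \<in> kd_rel K"
    unfolding g_def lincomb_smult by (rule kd_rel.smult) (rule less.prems(3))
  have g_j: "g j = 1" using less.prems(5) by (simp add: g_def)
  show ?case
  proof (cases "\<forall>i\<in>I. D (g i) = 0")
    case True
    then show ?thesis using rel_g g_j less.prems(4) by (metis mem_K_iff one_neq_zero)
  next
    case False
    then obtain j' where j': "j' \<in> I" "D (g j') \<noteq> 0" by auto
    let ?J = "I - {j}"
    have "lincomb I (\<lambda>i. D (g i)) w \<in> kd_rel K"
      by (rule kd_rel_lincomb_D[OF less.prems(2) rel_g])
    then have "lincomb ?J (\<lambda>i. D (g i)) w \<in> kd_rel K"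
      using lincomb_remove[OF less.prems(1,4), of "\<lambda>i. D (g i)" w] g_j
      by (simp add: lincomb_def)
    moreover have "card ?J < card I" using less.prems(1,4) by (meson card_Diff1_less)
    moreover have "j' \<in> ?J" using j' g_j by auto
    ultimately obtain c where c: "\<forall>i\<in>?J. c i \<in> K" "\<exists>i\<in>?J. c i \<noteq> 0" "lincomb ?J c w \<in> kd_rel K"
      using less.hyps[of ?J "\<lambda>i. D (g i)" j'] less.prems(1,2) j'(2) by auto
    have "lincomb I (c(j := 0)) w = lincomb ?J c w"
      using lincomb_remove[OF less.prems(1,4), of "c(j := 0)" w] lincomb_cong[of ?J "c(j := 0)" c w]
      by auto
    moreover have "\<forall>i\<in>I. (c(j := 0)) i \<in> K" using c(1) by (simp add: mem_K_iff)
    moreover have "\<exists>i\<in>I. (c(j := 0)) i \<noteq> 0" using c(2) by auto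
    ultimately show ?thesis using c(3) by metis
  qed
qed

lemma tens_rel_lincomb_right:
  assumes "finite J" "\<And>i. i \<in> J \<Longrightarrow> w i \<in> kerD1 D K" "\<And>i. i \<in> J \<Longrightarrow> a i \<in> K"
  shows "(\<lambda>p. tdelta (f, lincomb J a w) p - (\<Sum>i\<in>J. tdelta (f, \<lambda>t. a i * w i t) p)) \<in> tens_rel K D"
  using assms
proof (induction J rule: finite_induct)
  case empty
  have "(\<lambda>p. tdelta (f, \<lambda>t. 0 + 0) p - tdelta (f, \<lambda>t. 0) p - tdelta (f, \<lambda>t. 0) p) \<in> tens_rel K D"
    by (rule tens_rel.add_right) (simp_all add: kerD1_zero)
  from tens_rel.neg[OF this] show ?case by (simp add: lincomb_def)
next
  case (insert j J)
  have "(\<lambda>p. tdelta (f, \<lambda>t. a j * w j t + lincomb J a w t) p - tdelta (f, \<lambda>t. a j * w j t) p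
      - tdelta (f, lincomb J a w) p) \<in> tens_rel K D"
    using insert.prems
    by (intro tens_rel.add_right[of "\<lambda>t. a j * w j t", simplified] kerD1_smult kerD1_lincomb) auto
  moreover have "(\<lambda>p. tdelta (f, lincomb J a w) p - (\<Sum>i\<in>J. tdelta (f, \<lambda>t. a i * w i t) p))
      \<in> tens_rel K D"
    by (rule insert.IH) (use insert.prems in auto)
  moreover have "lincomb (insert j J) a w = (\<lambda>t. a j * w j t + lincomb J a w t)"
    using insert.hyps by (simp add: lincomb_def)
  ultimately show ?case
    using tens_rel.add insert.hyps by (fastforce simp: algebra_simps)
qed

text \<open>f_j \<otimes> w_j = f_j \<otimes> (sum a_i w_i) = sum (a_i f_j) \<otimes> w_i, by K-balancedness.\<close>

lemma tens_rel_tensor_sum_eliminate: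
  assumes "finite I" "j \<in> I" "\<And>i. i \<in> I \<Longrightarrow> w i \<in> kerD1 D K"
    and "\<And>i. i \<in> I - {j} \<Longrightarrow> a i \<in> K" "omega_eq K (w j) (lincomb (I - {j}) a w)"
  shows "(\<lambda>p. tensor_sum I f w p - tensor_sum (I - {j}) (\<lambda>i. f i + a i * f j) w p) \<in> tens_rel K D"
proof -
  let ?J = "I - {j}"
  let ?w' = "lincomb ?J a w"
  have w_J: "\<And>i. i \<in> ?J \<Longrightarrow> w i \<in> kerD1 D K" using assms(3) by auto
  have rep: "(\<lambda>p. tdelta (f j, w j) p - tdelta (f j, ?w') p) \<in> tens_rel K D"
    by (rule tens_rel.rep[OF assms(3)[OF assms(2)] kerD1_lincomb[OF w_J assms(4)] assms(5)])
  have right: "(\<lambda>p. tdelta (f j, ?w') p - (\<Sum>i\<in>?J. tdelta (f j, \<lambda>t. a i * w i t) p))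
      \<in> tens_rel K D"
    using assms(1) by (intro tens_rel_lincomb_right w_J assms(4)) auto
  have balanced: "(\<lambda>p. \<Sum>i\<in>?J. tdelta (a i * f j, w i) p - tdelta (f j, \<lambda>t. a i * w i t) p)
      \<in> tens_rel K D"
    by (intro tens_rel_sum tens_rel.balanced w_J assms(4))
  have left: "(\<lambda>p. \<Sum>i\<in>?J. tdelta (f i + a i * f j, w i) p - tdelta (f i, w i) p
      - tdelta (a i * f j, w i) p) \<in> tens_rel K D"
    by (intro tens_rel_sum tens_rel.add_left w_J)
  from tens_rel_diff[OF tens_rel_diff[OF tens_rel.add[OF rep right] balanced] left]
  show ?thesis
    unfolding tensor_sum_def using assms(1,2) by (simp add: sum_subtractf sum.distrib sum.remove algebra_simps)
qed

lemma tens_rel_tensor_sum: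
  assumes "finite I" "\<And>i. i \<in> I \<Longrightarrow> w i \<in> kerD1 D K" "lincomb I f w \<in> kd_rel K"
  shows "tensor_sum I f w \<in> tens_rel K D"
  using assms
proof (induction "card I" arbitrary: I f rule: less_induct)
  case less
  show ?case
  proof (cases "\<forall>i\<in>I. f i = 0")
    case True
    have "(\<lambda>p. \<Sum>i\<in>I. tdelta (0, w i) p) \<in> tens_rel K D"
      by (intro tens_rel_sum tens_rel_zero_left less.prems(2))
    then show ?thesis unfolding tensor_sum_def using True by simp
  next
    case False
    then obtain j0 where "j0 \<in> I" "f j0 \<noteq> 0" by auto
    then obtain c where c: "\<forall>i\<in>I. c i \<in> K" "\<exists>i\<in>I. c i \<noteq> 0" "lincomb I c w \<in> kd_rel K"
      using kerD1_L_relation_imp_K_relation[OF less.prems] by blast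
    then obtain j where j: "j \<in> I" "c j \<noteq> 0" by auto
    let ?J = "I - {j}"
    define a where "a i = - c i / c j" for i
    have a_K: "a i \<in> K" if "i \<in> ?J" for i
      using c(1) that j D_divide_const[of "- c i" "c j"] by (auto simp: a_def D_minus mem_K_iff)
    have w_j: "omega_eq K (w j) (lincomb ?J a w)"
      unfolding a_def by (rule kd_rel_lincomb_solve[OF less.prems(1) j c(3)])
    have rel_J: "lincomb ?J (\<lambda>i. f i + a i * f j) w \<in> kd_rel K"
      unfolding lincomb_substitute[OF less.prems(1) j(1)]
      by (intro kd_rel_diff less.prems(3) kd_rel.smult w_j[unfolded omega_eq_def])
    have "card ?J < card I" using less.prems(1) j(1) by (meson card_Diff1_less)
    from less.hyps[OF this _ _ rel_J] less.prems(1,2)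
    have "tensor_sum ?J (\<lambda>i. f i + a i * f j) w \<in> tens_rel K D" by simp
    from tens_rel.add[OF tens_rel_tensor_sum_eliminate[OF less.prems(1) j(1) less.prems(2) a_K w_j, of f] this]
    show ?thesis by simp
  qed
qed

end

theorem lemma3p7:
  fixes K :: "'a::field set" and D :: "'a \<Rightarrow> 'a"
  assumes D_add: "\<And>a b. D (a + b) = D a + D b"
    and D_mult: "\<And>a b. D (a * b) = a * D b + D a * b"
    and ker_D: "{x. D x = 0} = K"
  shows "\<forall>\<xi> \<eta>. tensor_elem K D \<xi> \<and> tensor_elem K D \<eta> \<and> omega_eq K (mult_map \<xi>) (mult_map \<eta>)
           \<longrightarrow> (\<lambda>p. \<xi> p - \<eta> p) \<in> tens_rel K D"
proof (intro allI impI, elim conjE)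
  interpret derivation_with_kernel K D using assms by unfold_locales
  fix \<xi> \<eta>
  assume elems: "tensor_elem K D \<xi>" "tensor_elem K D \<eta>" and eq: "omega_eq K (mult_map \<xi>) (mult_map \<eta>)"
  define S where "S = {p. \<xi> p \<noteq> 0} \<union> {p. \<eta> p \<noteq> 0}"
  define \<zeta> where "\<zeta> = (\<lambda>p. \<xi> p - \<eta> p)"
  from elems have fin: "finite {p. \<xi> p \<noteq> 0}" "finite {p. \<eta> p \<noteq> 0}"
    and ker: "\<And>p. p \<in> S \<Longrightarrow> snd p \<in> kerD1 D K"
    by (auto simp: tensor_elem_def S_def)
  have S: "finite S" "{p. \<zeta> p \<noteq> 0} \<subseteq> S"
    using fin by (auto simp: S_def \<zeta>_def)
  have "mult_map \<zeta> \<in> kd_rel K"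
    using eq mult_map_diff[OF fin] by (simp add: omega_eq_def \<zeta>_def)
  then have "tensor_sum S (\<lambda>p. of_int (\<zeta> p) * fst p) snd \<in> tens_rel K D"
    unfolding mult_map_eq_lincomb[OF S] by (intro tens_rel_tensor_sum S(1) ker)
  from tens_rel.add[OF tens_rel_minus_tensor_sum[OF S ker] this]
  show "(\<lambda>p. \<xi> p - \<eta> p) \<in> tens_rel K D" by (simp add: \<zeta>_def)
qed

end
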